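(* Let $S_0$ be the initial state of a $d$-dimensional Hegselmann–Krause system with social network $G=(V,E)$, $n=|V|$ agents and confidence bound $\varepsilon>0$, evolving under uniform random asynchronous updates, and let $\delta>0$. Then the expected convergence time to a $\delta$-stable state is $\operatorname{O}(\Phi(S_0)\, n|E|/\delta^2)$, and this is at most $\operatorname{O}\big(n|E|^2(\varepsilon/\delta)^2\big)$.
   Context: A $d$-dimensional Hegselmann–Krause system (HKS) consists of a finite undirected graph $G=(V,E)$ (the social network) whose $n=|V|$ nodes are agents, a confidence bound $\varepsilon>0$, and initial opinions (positions) $x_v(0)\in\mathbb{R}^d$ for $v\in V$. A state is an assignment of positions $x_v\in\mathbb{R}^d$ to the agents. In a state, the influencing neighborhood of $v$ is $N_v=\{u\in V:\{u,v\}\in E,\ \|x_u-x_v\|_2\le\varepsilon\}\cup\{v\}$. The influence network is the graph $(V,E_I)$ with $E_I=\{\{u,v\}\in E:\|x_u-x_v\|_2\le\varepsilon\}$, and the length of an edge $\{u,v\}$ is $\|x_u-x_v\|_2$. Uniform random asynchronous updates: at each step $t=0,1,2,\dots$ one agent $v$ is chosen uniformly at random (independently of the past) and its position becomes $x_v(t+1)=\frac{1}{|N_v(t)|}\sum_{u\in N_v(t)}x_u(t)$, while all other agents keep their positions. A state is $\delta$-stable if every edge of the influence network has length at most $\delta$. The convergence time is the number of steps until a $\delta$-stable state is reached for the first time. The potential of a state $S$ is $\Phi(S)=\sum_{\{u,v\}\in E}\min\{\|x_u-x_v\|_2^2,\varepsilon^2\}$. The constants in the $\operatorname{O}$-notation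 are absolute (independent of $G$, $d$, $\varepsilon$, $\delta$ and the initial state). *)

theory Defs
  imports "HOL-Probability.Probability"
begin

text \<open>Agents are the naturals 0..n-1; a position in R^d is a function nat => real
  of which only coordinates 0..d-1 matter; a state maps agents to positions.
  The social network is a set E of 2-element sets of agents.\<close>

definition edist :: "nat \<Rightarrow> (nat \<Rightarrow> real) \<Rightarrow> (nat \<Rightarrow> real) \<Rightarrow> real" where
  "edist d a b = sqrt (\<Sum>k<d. (a k - b k)^2)"

definition simple_graph :: "nat \<Rightarrow> nat set set \<Rightarrow> bool" where
  "simple_graph n E \<longleftrightarrow> E \<subseteq> {{u, v} | u v. u < n \<and> v < n \<and> u \<noteq> v}"

definition infl_nbhd :: "nat \<Rightarrow> nat set set \<Rightarrow> real \<Rightarrow> (nat \<Rightarrow> nat \<Rightarrow> real) \<Rightarrow> nat \<Rightarrow> nat set" where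
  "infl_nbhd d E \<epsilon> x v = {u. {u, v} \<in> E \<and> edist d (x u) (x v) \<le> \<epsilon>} \<union> {v}"

definition hk_update :: "nat \<Rightarrow> nat set set \<Rightarrow> real \<Rightarrow> (nat \<Rightarrow> nat \<Rightarrow> real) \<Rightarrow> nat \<Rightarrow> (nat \<Rightarrow> nat \<Rightarrow> real)" where
  "hk_update d E \<epsilon> x v =
     x(v := (\<lambda>k. (\<Sum>u\<in>infl_nbhd d E \<epsilon> x v. x u k) / real (card (infl_nbhd d E \<epsilon> x v))))"

primrec hk_traj :: "nat \<Rightarrow> nat set set \<Rightarrow> real \<Rightarrow> (nat \<Rightarrow> nat \<Rightarrow> real) \<Rightarrow> nat stream \<Rightarrow> nat \<Rightarrow> (nat \<Rightarrow> nat \<Rightarrow> real)" where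
  "hk_traj d E \<epsilon> x0 \<omega> 0 = x0"
| "hk_traj d E \<epsilon> x0 \<omega> (Suc t) = hk_update d E \<epsilon> (hk_traj d E \<epsilon> x0 \<omega> t) (\<omega> !! t)"

definition delta_stable :: "nat \<Rightarrow> nat set set \<Rightarrow> real \<Rightarrow> real \<Rightarrow> (nat \<Rightarrow> nat \<Rightarrow> real) \<Rightarrow> bool" where
  "delta_stable d E \<epsilon> \<delta> x \<longleftrightarrow>
     (\<forall>u v. {u, v} \<in> E \<and> edist d (x u) (x v) \<le> \<epsilon> \<longrightarrow> edist d (x u) (x v) \<le> \<delta>)"

definition conv_time :: "nat \<Rightarrow> nat set set \<Rightarrow> real \<Rightarrow> real \<Rightarrow> (nat \<Rightarrow> nat \<Rightarrow> real) \<Rightarrow> nat stream \<Rightarrow> ennreal" where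
  "conv_time d E \<epsilon> \<delta> x0 \<omega> =
     (if \<exists>t. delta_stable d E \<epsilon> \<delta> (hk_traj d E \<epsilon> x0 \<omega> t)
      then of_nat (LEAST t. delta_stable d E \<epsilon> \<delta> (hk_traj d E \<epsilon> x0 \<omega> t)) else \<infinity>)"

text \<open>Uniform random asynchronous updates: i.i.d. uniform choices of agents.\<close>
definition agent_choices :: "nat \<Rightarrow> nat stream measure" where
  "agent_choices n = stream_space (measure_pmf (pmf_of_set {..<n}))"

definition expected_conv_time :: "nat \<Rightarrow> nat \<Rightarrow> nat set set \<Rightarrow> real \<Rightarrow> real \<Rightarrow> (nat \<Rightarrow> nat \<Rightarrow> real) \<Rightarrow> ennreal" where
  "expected_conv_time n d E \<epsilon> \<delta> x0 = (\<integral>\<^sup>+ \<omega>. conv_time d E \<epsilon> \<delta> x0 \<omega> \<partial>agent_choices n)"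

text \<open>Length of an edge {u,v} (well defined since edist is symmetric).\<close>
definition edge_len :: "nat \<Rightarrow> (nat \<Rightarrow> nat \<Rightarrow> real) \<Rightarrow> nat set \<Rightarrow> real" where
  "edge_len d x e = (THE r. \<exists>u v. e = {u, v} \<and> r = edist d (x u) (x v))"

definition potential :: "nat \<Rightarrow> nat set set \<Rightarrow> real \<Rightarrow> (nat \<Rightarrow> nat \<Rightarrow> real) \<Rightarrow> real" where
  "potential d E \<epsilon> x = (\<Sum>e\<in>E. min ((edge_len d x e)^2) (\<epsilon>^2))"

end

theory Submission
  imports Defs
begin

text \<open>
  Updating agent \<open>v\<close> moves it to the barycentre \<open>m\<close> of its influencing neighbourhood \<open>N v\<close>.
  Edges inside the confidence bound contribute their squared length to the potential, and the
  barycentre minimises the sum of these, while edges outside the bound are capped at \<open>\<epsilon>\<^sup>2\<close>;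
  so the update lowers the potential by at least the gain \<open>card (N v) * \<parallel>m - x v\<parallel>\<^sup>2\<close>.

  If the state is not \<open>\<delta>\<close>-stable, some influence edge \<open>{u0, v0}\<close> is longer than \<open>\<delta>\<close>.
  Let \<open>f\<close> be the projection onto \<open>x u0 - x v0\<close> and cut the agents at the level \<open>f u0\<close>: by
  symmetry of the influence network the local differences inside the cut cancel, so
  \<open>\<parallel>x u0 - x v0\<parallel>\<^sup>2 = f u0 - f v0\<close> is at most \<open>\<Sum>w. \<bar>\<Sum>u\<in>N w. f w - f u\<bar>\<close>. Cauchy-Schwarz with weights
  \<open>card (N w)\<close>, whose sum over the non-isolated agents is at most \<open>4 |E|\<close>, turns this into
  \<open>\<delta>\<^sup>2 \<le> 4 |E| \<Sum>w. gain w\<close>. Hence a uniformly random update lowers the potential in expectation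
  by at least \<open>\<delta>\<^sup>2 / (4 n |E|)\<close>, and the additive drift theorem bounds the expected convergence
  time by \<open>4 n |E| \<Phi>(S\<^sub>0) / \<delta>\<^sup>2\<close>. Finally \<open>\<Phi> \<le> |E| \<epsilon>\<^sup>2\<close>.
\<close>

section \<open>Additive drift for hitting times\<close>

primrec trajectory :: "('s \<Rightarrow> 'a \<Rightarrow> 's) \<Rightarrow> 's \<Rightarrow> 'a stream \<Rightarrow> nat \<Rightarrow> 's" where
  "trajectory f x \<omega> 0 = x"
| "trajectory f x \<omega> (Suc t) = f (trajectory f x \<omega> t) (\<omega> !! t)"

definition hitting_time :: "('s \<Rightarrow> bool) \<Rightarrow> ('s \<Rightarrow> 'a \<Rightarrow> 's) \<Rightarrow> 's \<Rightarrow> 'a stream \<Rightarrow> ennreal" where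
  "hitting_time P f x \<omega> =
     (if \<exists>t. P (trajectory f x \<omega> t) then of_nat (LEAST t. P (trajectory f x \<omega> t)) else \<infinity>)"

lemma trajectory_Cons_Suc: "trajectory f x (v ## \<omega>) (Suc t) = trajectory f (f x v) \<omega> t"
  by (induction t) auto

lemma hitting_time_Cons:
  "hitting_time P f x (v ## \<omega>) = (if P x then 0 else 1 + hitting_time P f (f x v) \<omega>)"
proof -
  let ?P = "\<lambda>t. P (trajectory f x (v ## \<omega>) t)"
  let ?Q = "\<lambda>t. P (trajectory f (f x v) \<omega> t)"
  have PQ: "?P (Suc t) = ?Q t" for t
    by (simp only: trajectory_Cons_Suc)
  show ?thesis
  proof (cases "P x")
    case True
    have "(LEAST t. ?P t) = 0"
      by (rule Least_equality) (simp_all add: True)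
    moreover have "\<exists>t. ?P t"
      using True by (intro exI[of _ 0]) simp
    ultimately show ?thesis
      using True by (simp add: hitting_time_def)
  next
    case False
    have ex: "(\<exists>t. ?P t) \<longleftrightarrow> (\<exists>t. ?Q t)"
    proof
      assume "\<exists>t. ?P t"
      then obtain t where Pt: "?P t" ..
      show "\<exists>t. ?Q t"
      proof (cases t)
        case 0
        with Pt False show ?thesis
          by simp
      next
        case (Suc s)
        with Pt have "?Q s"
          by (simp only: PQ)
        then show ?thesis ..
      qed
    next
      assume "\<exists>t. ?Q t"
      then obtain t where "?Q t" ..
      then have "?P (Suc t)"
        by (simp only: PQ)
      then show "\<exists>t. ?P t" ..
    qed
    have "(LEAST t. ?P t) = Suc (LEAST t. ?Q t)" if "?Q t" for t
    proof -
      have "(LEAST t. ?P t) = Suc (LEAST t. ?P (Suc t))"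
        using that False
        by (intro Least_Suc[of _ "Suc t"]) (simp_all only: PQ trajectory.simps(1) not_False_eq_True)
      then show ?thesis
        by (simp only: PQ)
    qed
    with False ex show ?thesis
      by (auto simp: hitting_time_def)
  qed
qed

primrec hitting_time_upto :: "nat \<Rightarrow> ('s \<Rightarrow> bool) \<Rightarrow> ('s \<Rightarrow> 'a \<Rightarrow> 's) \<Rightarrow> 's \<Rightarrow> 'a stream \<Rightarrow> ennreal" where
  "hitting_time_upto 0 P f x = (\<lambda>_. 0)"
| "hitting_time_upto (Suc N) P f x =
     (\<lambda>\<omega>. if P x then 0 else 1 + hitting_time_upto N P f (f x (shd \<omega>)) (stl \<omega>))"

lemma hitting_time_upto_eq_min: "hitting_time_upto N P f x \<omega> = min (hitting_time P f x \<omega>) (of_nat N)"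
proof (induction N arbitrary: x \<omega>)
  case (Suc N)
  have "1 + min a b = min (1 + a) (1 + b)" for a b :: ennreal
    by (simp add: min_def ennreal_add_left_cancel_le)
  with Suc hitting_time_Cons[of P f x "shd \<omega>" "stl \<omega>"] show ?case
    by simp
qed simp

lemma hitting_time_eq_SUP_upto: "hitting_time P f x \<omega> = (SUP N. hitting_time_upto N P f x \<omega>)"
proof (cases "\<exists>t. P (trajectory f x \<omega> t)")
  case True
  then obtain k where "hitting_time P f x \<omega> = of_nat k"
    by (simp add: hitting_time_def)
  then show ?thesis
    by (intro antisym SUP_upper2[of k] SUP_least) (auto simp: hitting_time_upto_eq_min)
next
  case False
  then have "hitting_time_upto N P f x \<omega> = of_nat N" for N
    by (simp add: hitting_time_upto_eq_min hitting_time_def)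
  with False show ?thesis
    by (simp add: hitting_time_def ennreal_SUP_of_nat_eq_top)
qed

lemma measurable_hitting_time_upto:
  fixes p :: "'a::countable pmf"
  shows "hitting_time_upto N P f x \<in> borel_measurable (stream_space (measure_pmf p))"
proof (induction N arbitrary: x)
  case (Suc N)
  have shd: "shd \<in> stream_space (measure_pmf p) \<rightarrow>\<^sub>M count_space UNIV"
    using measurable_shd[of "measure_pmf p"] by (simp cong: measurable_cong_sets)
  have "(\<lambda>\<omega>. 1 + hitting_time_upto N P f (f x (shd \<omega>)) (stl \<omega>))
      \<in> borel_measurable (stream_space (measure_pmf p))"
  proof (rule measurable_compose_countable'[OF _ shd])
    fix v
    show "(\<lambda>\<omega>. 1 + hitting_time_upto N P f (f x v) (stl \<omega>)) \<in> borel_measurable (stream_space (measure_pmf p))"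
      using measurable_compose[OF measurable_stl Suc.IH] by simp
  qed simp
  then show ?case
    by simp
qed simp

theorem additive_drift:
  fixes p :: "'a::countable pmf" and \<Phi> :: "'s \<Rightarrow> ennreal"
  assumes drift: "\<And>x. \<not> P x \<Longrightarrow> c + (\<integral>\<^sup>+v. \<Phi> (f x v) \<partial>p) \<le> \<Phi> x"
  shows "c * (\<integral>\<^sup>+\<omega>. hitting_time P f x \<omega> \<partial>stream_space (measure_pmf p)) \<le> \<Phi> x"
proof -
  let ?S = "stream_space (measure_pmf p)"
  interpret S: prob_space ?S
    by (rule prob_space.prob_space_stream_space) (rule prob_space_measure_pmf)
  have upto: "c * (\<integral>\<^sup>+\<omega>. hitting_time_upto N P f x \<omega> \<partial>?S) \<le> \<Phi> x" for N
  proof (induction N arbitrary: x)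
    case (Suc N)
    show ?case
    proof (cases "P x")
      case False
      have "c * (\<integral>\<^sup>+\<omega>. hitting_time_upto (Suc N) P f x \<omega> \<partial>?S)
          = c * (\<integral>\<^sup>+v. (\<integral>\<^sup>+\<omega>. 1 + hitting_time_upto N P f (f x v) \<omega> \<partial>?S) \<partial>p)"
        using prob_space.nn_integral_stream_space[OF prob_space_measure_pmf
            measurable_hitting_time_upto[of "Suc N" P f x p]] False
        by simp
      also have "\<dots> = c + (\<integral>\<^sup>+v. c * (\<integral>\<^sup>+\<omega>. hitting_time_upto N P f (f x v) \<omega> \<partial>?S) \<partial>p)"
        by (simp add: nn_integral_add measurable_hitting_time_upto S.emeasure_space_1
              nn_integral_cmult distrib_left measure_pmf.emeasure_space_1)
      also have "\<dots> \<le> c + (\<integral>\<^sup>+v. \<Phi> (f x v) \<partial>p)"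
        by (intro add_left_mono nn_integral_mono Suc.IH)
      also have "\<dots> \<le> \<Phi> x"
        using drift False .
      finally show ?thesis .
    qed simp
  qed simp
  have "incseq (\<lambda>N \<omega>. hitting_time_upto N P f x \<omega>)"
    by (auto simp: incseq_def le_fun_def hitting_time_upto_eq_min intro: min.coboundedI2)
  then have "(\<integral>\<^sup>+\<omega>. hitting_time P f x \<omega> \<partial>?S) = (SUP N. \<integral>\<^sup>+\<omega>. hitting_time_upto N P f x \<omega> \<partial>?S)"
    by (simp add: hitting_time_eq_SUP_upto nn_integral_monotone_convergence_SUP
          measurable_hitting_time_upto)
  then show ?thesis
    using upto by (simp add: SUP_mult_left_ennreal SUP_least)
qed

section \<open>Barycentres, cuts and Cauchy-Schwarz\<close>

definition sqdist :: "nat \<Rightarrow> (nat \<Rightarrow> real) \<Rightarrow> (nat \<Rightarrow> real) \<Rightarrow> real" where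
  "sqdist d a b = (\<Sum>k<d. (a k - b k)^2)"

lemma sqdist_nonneg: "0 \<le> sqdist d a b"
  by (simp add: sqdist_def sum_nonneg)

lemma sqdist_self [simp]: "sqdist d a a = 0"
  by (simp add: sqdist_def)

lemma sqdist_commute: "sqdist d a b = sqdist d b a"
  by (simp add: sqdist_def power2_commute)

lemma sum_sqdist_barycentre:
  assumes "finite N" and "N \<noteq> {}" and m: "\<And>k. m k = (\<Sum>u\<in>N. a u k) / real (card N)"
  shows "(\<Sum>u\<in>N. sqdist d (a u) m) + real (card N) * sqdist d m c = (\<Sum>u\<in>N. sqdist d (a u) c)"
proof -
  have card_pos: "real (card N) > 0"
    using assms by (simp add: card_gt_0_iff)
  have coord: "(\<Sum>u\<in>N. (a u k - m k)^2) + real (card N) * (m k - c k)^2 = (\<Sum>u\<in>N. (a u k - c k)^2)" for k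
  proof -
    have centred: "(\<Sum>u\<in>N. a u k - m k) = 0"
      using m[of k] card_pos by (simp add: sum_subtractf)
    have "(\<Sum>u\<in>N. (a u k - c k)^2)
        = (\<Sum>u\<in>N. (a u k - m k)^2 + 2 * (m k - c k) * (a u k - m k) + (m k - c k)^2)"
      by (intro sum.cong refl) (simp add: power2_eq_square algebra_simps)
    also have "\<dots> = (\<Sum>u\<in>N. (a u k - m k)^2) + 2 * (m k - c k) * (\<Sum>u\<in>N. a u k - m k)
        + real (card N) * (m k - c k)^2"
      by (simp only: sum.distrib sum_distrib_left[symmetric] sum_constant of_nat_def)
    finally show ?thesis
      by (simp add: centred)
  qed
  have swap: "(\<Sum>u\<in>N. sqdist d (a u) b) = (\<Sum>k<d. \<Sum>u\<in>N. (a u k - b k)^2)" for b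
    unfolding sqdist_def by (rule sum.swap)
  show ?thesis
    unfolding swap by (simp add: sqdist_def sum_distrib_left coord flip: sum.distrib)
qed

text \<open>Sum over the cut \<open>S = {w. f u0 \<le> f w}\<close>: by symmetry of \<open>A\<close> the pairs inside \<open>S\<close> cancel, and
  every pair leaving \<open>S\<close>, in particular \<open>(u0, v0)\<close>, contributes positively.\<close>
lemma gap_le_sum_abs_local_differences:
  fixes f :: "'a \<Rightarrow> real"
  assumes "finite V" and A_sub: "\<And>w. w \<in> V \<Longrightarrow> A w \<subseteq> V"
    and A_sym: "\<And>w u. w \<in> V \<Longrightarrow> u \<in> V \<Longrightarrow> u \<in> A w \<longleftrightarrow> w \<in> A u"
    and "u0 \<in> V" and "v0 \<in> A u0" and "f v0 < f u0"
  shows "f u0 - f v0 \<le> (\<Sum>w\<in>V. \<bar>\<Sum>u\<in>A w. f w - f u\<bar>)"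
proof -
  define S where "S = {w\<in>V. f u0 \<le> f w}"
  have "S \<subseteq> V" "finite S"
    using \<open>finite V\<close> by (auto simp: S_def)
  have fin_A: "finite (A w)" if "w \<in> V" for w
    using A_sub[OF that] \<open>finite V\<close> by (rule finite_subset)
  have inside: "(\<Sum>w\<in>S. \<Sum>u\<in>A w \<inter> S. f w - f u) = 0"
  proof -
    have "(\<Sum>w\<in>S. \<Sum>u\<in>A w \<inter> S. f u) = (\<Sum>u\<in>S. \<Sum>w\<in>{w\<in>S. u \<in> A w}. f u)"
      using sum.swap_restrict[OF \<open>finite S\<close> \<open>finite S\<close>, of "\<lambda>w u. f u" "\<lambda>w u. u \<in> A w"]
      by (simp add: Int_def conj_commute)
    also have "\<dots> = (\<Sum>u\<in>S. \<Sum>w\<in>A u \<inter> S. f u)"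
      using \<open>S \<subseteq> V\<close> A_sym by (intro sum.cong) auto
    finally show ?thesis
      by (simp add: sum_subtractf)
  qed
  have outward: "0 < f w - f u" if "w \<in> S" "u \<in> A w - S" for w u
    using that A_sub \<open>S \<subseteq> V\<close> by (force simp: S_def)
  have "u0 \<in> S" "v0 \<in> A u0 - S"
    using assms by (auto simp: S_def)
  then have "f u0 - f v0 \<le> (\<Sum>u\<in>A u0 - S. f u0 - f u)"
    using outward fin_A \<open>u0 \<in> V\<close> by (intro member_le_sum) (auto intro: less_imp_le)
  also have "\<dots> \<le> (\<Sum>w\<in>S. \<Sum>u\<in>A w - S. f w - f u)"
    using \<open>u0 \<in> S\<close> \<open>finite S\<close> outward
    by (intro member_le_sum[of u0 S "\<lambda>w. \<Sum>u\<in>A w - S. f w - f u"] sum_nonneg)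
       (auto intro: less_imp_le)
  also have "\<dots> = (\<Sum>w\<in>S. (\<Sum>u\<in>A w \<inter> S. f w - f u) + (\<Sum>u\<in>A w - S. f w - f u))"
    using inside by (simp add: sum.distrib)
  also have "\<dots> = (\<Sum>w\<in>S. \<Sum>u\<in>A w. f w - f u)"
    using fin_A \<open>S \<subseteq> V\<close> by (intro sum.cong refl sum.Int_Diff[symmetric]) auto
  also have "\<dots> \<le> (\<Sum>w\<in>V. \<bar>\<Sum>u\<in>A w. f w - f u\<bar>)"
    using \<open>finite V\<close> \<open>S \<subseteq> V\<close> by (intro order.trans[OF sum_mono sum_mono2]) auto
  finally show ?thesis .
qed

lemma weighted_Cauchy_Schwarz_sum:
  fixes a c :: "'a \<Rightarrow> real"
  assumes "\<And>w. w \<in> W \<Longrightarrow> 0 < a w"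
  shows "(\<Sum>w\<in>W. c w)^2 \<le> (\<Sum>w\<in>W. a w) * (\<Sum>w\<in>W. (c w)^2 / a w)"
proof -
  have "(\<Sum>w\<in>W. c w) = (\<Sum>w\<in>W. sqrt (a w) * (c w / sqrt (a w)))"
    by (intro sum.cong refl) (use assms in force)
  then have "(\<Sum>w\<in>W. c w)^2 \<le> (\<Sum>w\<in>W. (sqrt (a w))^2) * (\<Sum>w\<in>W. (c w / sqrt (a w))^2)"
    using Cauchy_Schwarz_ineq_sum[of "\<lambda>w. sqrt (a w)" "\<lambda>w. c w / sqrt (a w)" W] by simp
  also have "\<dots> = (\<Sum>w\<in>W. a w) * (\<Sum>w\<in>W. (c w)^2 / a w)"
    using assms by (simp add: power_divide less_imp_le)
  finally show ?thesis .
qed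

lemma sum_projected_differences_sq_le:
  assumes "finite N" and "N \<noteq> {}" and m: "\<And>k. m k = (\<Sum>u\<in>N. a u k) / real (card N)"
  shows "(\<Sum>u\<in>N. \<Sum>k<d. (c k - a u k) * e k)^2 \<le> (real (card N))^2 * sqdist d c m * (\<Sum>k<d. (e k)^2)"
proof -
  have card_pos: "real (card N) > 0"
    using assms by (simp add: card_gt_0_iff)
  have inner: "(\<Sum>u\<in>N. c k - a u k) = real (card N) * (c k - m k)" for k
    using m[of k] card_pos by (simp add: sum_subtractf right_diff_distrib)
  have "(\<Sum>u\<in>N. \<Sum>k<d. (c k - a u k) * e k) = (\<Sum>k<d. (\<Sum>u\<in>N. c k - a u k) * e k)"
    by (subst sum.swap) (simp add: sum_distrib_right)
  also have "\<dots> = (\<Sum>k<d. (real (card N) * (c k - m k)) * e k)"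
    by (simp add: inner)
  finally have "(\<Sum>u\<in>N. \<Sum>k<d. (c k - a u k) * e k)^2
      \<le> (\<Sum>k<d. (real (card N) * (c k - m k))^2) * (\<Sum>k<d. (e k)^2)"
    by (simp only: Cauchy_Schwarz_ineq_sum)
  also have "(\<Sum>k<d. (real (card N) * (c k - m k))^2) = (real (card N))^2 * sqdist d c m"
    by (simp add: sqdist_def power_mult_distrib sum_distrib_left)
  finally show ?thesis .
qed

section \<open>The potential of a Hegselmann-Krause system\<close>

lemma edist_eq_sqrt_sqdist: "edist d a b = sqrt (sqdist d a b)"
  by (simp add: edist_def sqdist_def)

lemma edist_commute: "edist d a b = edist d b a"
  by (simp add: edist_eq_sqrt_sqdist sqdist_commute)

lemma edist_le_iff_sqdist_le: "0 \<le> r \<Longrightarrow> edist d a b \<le> r \<longleftrightarrow> sqdist d a b \<le> r^2"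
  using real_sqrt_le_iff[of "sqdist d a b" "r^2"] by (simp add: edist_eq_sqrt_sqdist)

lemma edge_len_doubleton: "edge_len d x {u, v} = edist d (x u) (x v)"
  unfolding edge_len_def
  by (rule the_equality) (auto simp: doubleton_eq_iff edist_commute)

lemma potential_nonneg: "0 \<le> potential d E \<epsilon> x"
  by (simp add: potential_def sum_nonneg)

lemma potential_le: "potential d E \<epsilon> x \<le> real (card E) * \<epsilon>^2"
  unfolding potential_def using sum_bounded_above[of E _ "\<epsilon>^2"] by simp

definition hk_mean :: "nat \<Rightarrow> nat set set \<Rightarrow> real \<Rightarrow> (nat \<Rightarrow> nat \<Rightarrow> real) \<Rightarrow> nat \<Rightarrow> nat \<Rightarrow> real" where
  "hk_mean d E \<epsilon> x v =
     (\<lambda>k. (\<Sum>u\<in>infl_nbhd d E \<epsilon> x v. x u k) / real (card (infl_nbhd d E \<epsilon> x v)))"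

definition hk_gain :: "nat \<Rightarrow> nat set set \<Rightarrow> real \<Rightarrow> (nat \<Rightarrow> nat \<Rightarrow> real) \<Rightarrow> nat \<Rightarrow> real" where
  "hk_gain d E \<epsilon> x v = real (card (infl_nbhd d E \<epsilon> x v)) * sqdist d (hk_mean d E \<epsilon> x v) (x v)"

lemma hk_update_eq: "hk_update d E \<epsilon> x v = x(v := hk_mean d E \<epsilon> x v)"
  by (simp add: hk_update_def hk_mean_def)

lemma hk_gain_nonneg: "0 \<le> hk_gain d E \<epsilon> x v"
  by (simp add: hk_gain_def sqdist_nonneg)

lemma self_in_infl_nbhd: "v \<in> infl_nbhd d E \<epsilon> x v"
  by (simp add: infl_nbhd_def)

lemma infl_nbhd_sym: "u \<in> infl_nbhd d E \<epsilon> x w \<longleftrightarrow> w \<in> infl_nbhd d E \<epsilon> x u"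
  by (auto simp: infl_nbhd_def insert_commute edist_commute)

context
  fixes n :: nat and E :: "nat set set"
  assumes graph: "simple_graph n E"
begin

lemma finite_edges: "finite E"
proof -
  have "E \<subseteq> (\<lambda>(u, v). {u, v}) ` ({..<n} \<times> {..<n})"
    using graph unfolding simple_graph_def by auto
  then show ?thesis
    by (rule finite_subset) auto
qed

lemma edge_endpoints: "{u, v} \<in> E \<Longrightarrow> u < n \<and> v < n \<and> u \<noteq> v"
  using graph unfolding simple_graph_def by (auto simp: doubleton_eq_iff)

lemma edgeE:
  assumes "e \<in> E"
  obtains u v where "e = {u, v}" "u \<noteq> v"
  using assms graph unfolding simple_graph_def by auto

lemma infl_nbhd_subset: "v < n \<Longrightarrow> infl_nbhd d E \<epsilon> x v \<subseteq> {..<n}"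
  unfolding infl_nbhd_def using edge_endpoints by auto

lemma finite_infl_nbhd: "finite (infl_nbhd d E \<epsilon> x v)"
proof -
  have "infl_nbhd d E \<epsilon> x v \<subseteq> insert v {..<n}"
    unfolding infl_nbhd_def using edge_endpoints by auto
  then show ?thesis
    by (rule finite_subset) auto
qed

lemma card_infl_nbhd_pos: "0 < card (infl_nbhd d E \<epsilon> x v)"
  using finite_infl_nbhd[of d \<epsilon> x v] self_in_infl_nbhd[of v d E \<epsilon> x] by (auto simp: card_gt_0_iff)

lemma potential_split_at:
  "potential d E \<epsilon> y =
     (\<Sum>u\<in>{u. {u, v} \<in> E}. min (sqdist d (y u) (y v)) (\<epsilon>^2))
     + (\<Sum>e\<in>{e\<in>E. v \<notin> e}. min ((edge_len d y e)^2) (\<epsilon>^2))"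
proof -
  have at_v: "{e\<in>E. v \<in> e} = (\<lambda>u. {u, v}) ` {u. {u, v} \<in> E}"
  proof (intro subset_antisym subsetI)
    fix e assume "e \<in> {e\<in>E. v \<in> e}"
    then obtain u where "e = {u, v}"
      by (auto elim!: edgeE simp: insert_commute)
    with \<open>e \<in> {e\<in>E. v \<in> e}\<close> show "e \<in> (\<lambda>u. {u, v}) ` {u. {u, v} \<in> E}"
      by auto
  qed auto
  have "inj_on (\<lambda>u. {u, v}) {u. {u, v} \<in> E}"
    by (rule inj_onI) (auto simp: doubleton_eq_iff)
  then have "(\<Sum>e\<in>{e\<in>E. v \<in> e}. min ((edge_len d y e)^2) (\<epsilon>^2))
      = (\<Sum>u\<in>{u. {u, v} \<in> E}. min (sqdist d (y u) (y v)) (\<epsilon>^2))"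
    by (simp add: at_v sum.reindex edge_len_doubleton edist_eq_sqrt_sqdist sqdist_nonneg)
  then show ?thesis
    unfolding potential_def sum.Int_Diff[OF finite_edges, of _ "{e. v \<in> e}"]
    by (simp add: Int_def set_diff_eq conj_commute)
qed

lemma capped_sqdist_hk_mean_le:
  assumes "0 < \<epsilon>"
  shows "(\<Sum>u\<in>{u. {u, v} \<in> E}. min (sqdist d (x u) (hk_mean d E \<epsilon> x v)) (\<epsilon>^2)) + hk_gain d E \<epsilon> x v
    \<le> (\<Sum>u\<in>{u. {u, v} \<in> E}. min (sqdist d (x u) (x v)) (\<epsilon>^2))"
proof -
  define N where "N = infl_nbhd d E \<epsilon> x v"
  define m where "m = hk_mean d E \<epsilon> x v"
  define nbrs where "nbrs = {u. {u, v} \<in> E}"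
  have "finite nbrs"
    using finite_subset[of nbrs "{..<n}"] edge_endpoints by (auto simp: nbrs_def)
  have "finite N" "v \<in> N"
    by (simp_all add: N_def finite_infl_nbhd self_in_infl_nbhd)
  have "N - {v} \<subseteq> nbrs"
    by (auto simp: N_def nbrs_def infl_nbhd_def)
  have far: "(\<Sum>u\<in>nbrs - (N - {v}). min (sqdist d (x u) m) (\<epsilon>^2))
      \<le> (\<Sum>u\<in>nbrs - (N - {v}). min (sqdist d (x u) (x v)) (\<epsilon>^2))"
  proof (rule sum_mono)
    fix u assume "u \<in> nbrs - (N - {v})"
    then have "\<not> sqdist d (x u) (x v) \<le> \<epsilon>^2"
      using edge_endpoints assms by (auto simp: nbrs_def N_def infl_nbhd_def edist_le_iff_sqdist_le)
    then show "min (sqdist d (x u) m) (\<epsilon>^2) \<le> min (sqdist d (x u) (x v)) (\<epsilon>^2)"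
      by simp
  qed
  have near: "(\<Sum>u\<in>N - {v}. min (sqdist d (x u) m) (\<epsilon>^2)) \<le> (\<Sum>u\<in>N - {v}. sqdist d (x u) m)"
    by (intro sum_mono) simp
  have "hk_gain d E \<epsilon> x v = real (card N) * sqdist d m (x v)"
    by (simp add: hk_gain_def N_def m_def)
  then have "(\<Sum>u\<in>N. sqdist d (x u) m) + hk_gain d E \<epsilon> x v = (\<Sum>u\<in>N. sqdist d (x u) (x v))"
    using \<open>finite N\<close> \<open>v \<in> N\<close>
    by (simp only:) (rule sum_sqdist_barycentre, auto simp: N_def m_def hk_mean_def)
  moreover have "(\<Sum>u\<in>N - {v}. sqdist d (x u) (x v)) = (\<Sum>u\<in>N - {v}. min (sqdist d (x u) (x v)) (\<epsilon>^2))"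
    using assms by (intro sum.cong) (auto simp: N_def infl_nbhd_def edist_le_iff_sqdist_le)
  ultimately have bary: "(\<Sum>u\<in>N - {v}. sqdist d (x u) m) + hk_gain d E \<epsilon> x v
      \<le> (\<Sum>u\<in>N - {v}. min (sqdist d (x u) (x v)) (\<epsilon>^2))"
    using \<open>finite N\<close> \<open>v \<in> N\<close> sqdist_nonneg[of d "x v" m] by (simp add: sum.remove)
  have split: "(\<Sum>u\<in>nbrs. g u) = (\<Sum>u\<in>nbrs - (N - {v}). g u) + (\<Sum>u\<in>N - {v}. g u)" for g :: "nat \<Rightarrow> real"
    using sum.subset_diff[OF \<open>N - {v} \<subseteq> nbrs\<close> \<open>finite nbrs\<close>] .
  show ?thesis
    unfolding nbrs_def[symmetric] m_def[symmetric] split using far near bary by linarith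
qed

lemma potential_hk_update_le:
  assumes "0 < \<epsilon>"
  shows "potential d E \<epsilon> (hk_update d E \<epsilon> x v) + hk_gain d E \<epsilon> x v \<le> potential d E \<epsilon> x"
proof -
  define x' where "x' = hk_update d E \<epsilon> x v"
  have "x' u = x u" if "{u, v} \<in> E" for u
    using that edge_endpoints by (auto simp: x'_def hk_update_eq)
  then have "(\<Sum>u\<in>{u. {u, v} \<in> E}. min (sqdist d (x' u) (x' v)) (\<epsilon>^2))
      = (\<Sum>u\<in>{u. {u, v} \<in> E}. min (sqdist d (x u) (hk_mean d E \<epsilon> x v)) (\<epsilon>^2))"
    by (intro sum.cong) (simp_all add: x'_def hk_update_eq)
  moreover have "(\<Sum>e\<in>{e\<in>E. v \<notin> e}. min ((edge_len d x' e)^2) (\<epsilon>^2))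
      = (\<Sum>e\<in>{e\<in>E. v \<notin> e}. min ((edge_len d x e)^2) (\<epsilon>^2))"
  proof (intro sum.cong refl)
    fix e assume "e \<in> {e\<in>E. v \<notin> e}"
    then obtain a b where "e = {a, b}" "a \<noteq> v" "b \<noteq> v"
      by (auto elim!: edgeE)
    then show "min ((edge_len d x' e)^2) (\<epsilon>^2) = min ((edge_len d x e)^2) (\<epsilon>^2)"
      by (simp add: edge_len_doubleton x'_def hk_update_eq)
  qed
  ultimately show ?thesis
    using capped_sqdist_hk_mean_le[OF assms, of d x v]
    by (simp add: potential_split_at[of _ _ _ v] x'_def)
qed

lemma sum_degree_le: "(\<Sum>w<n. card {e\<in>E. w \<in> e}) \<le> 2 * card E"
proof -
  have "(\<Sum>w<n. card {e\<in>E. w \<in> e}) = (\<Sum>w<n. \<Sum>e\<in>E. if w \<in> e then 1 else 0)"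
    using finite_edges by (simp add: sum.inter_filter[symmetric])
  also have "\<dots> = (\<Sum>e\<in>E. \<Sum>w<n. if w \<in> e then 1 else 0)"
    by (rule sum.swap)
  also have "\<dots> = (\<Sum>e\<in>E. card {w\<in>{..<n}. w \<in> e})"
    by (simp add: sum.inter_filter[symmetric])
  also have "\<dots> \<le> (\<Sum>e\<in>E. 2)"
  proof (rule sum_mono)
    fix e assume "e \<in> E"
    then obtain a b where "e = {a, b}"
      by (rule edgeE)
    then have "card {w\<in>{..<n}. w \<in> e} \<le> card {a, b}"
      by (intro card_mono) auto
    also have "\<dots> \<le> 2"
      by (simp add: card_insert_le_m1)
    finally show "card {w\<in>{..<n}. w \<in> e} \<le> 2" .
  qed
  finally show ?thesis
    by simp
qed

lemma card_infl_nbhd_le_degree: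
  assumes "infl_nbhd d E \<epsilon> x w \<noteq> {w}"
  shows "card (infl_nbhd d E \<epsilon> x w) \<le> 2 * card {e\<in>E. w \<in> e}"
proof -
  let ?N = "infl_nbhd d E \<epsilon> x w"
  have "card (?N - {w}) \<le> card {e\<in>E. w \<in> e}"
  proof (rule card_inj_on_le[where f = "\<lambda>u. {u, w}"])
    show "inj_on (\<lambda>u. {u, w}) (?N - {w})"
      by (rule inj_onI) (auto simp: doubleton_eq_iff)
  qed (use finite_edges in \<open>auto simp: infl_nbhd_def\<close>)
  moreover have "Suc (card (?N - {w})) = card ?N"
    by (rule card_Suc_Diff1) (simp_all add: finite_infl_nbhd self_in_infl_nbhd)
  moreover have "?N - {w} \<noteq> {}"
    using assms self_in_infl_nbhd[of w d E \<epsilon> x] by blast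
  then have "card (?N - {w}) \<ge> 1"
    using finite_infl_nbhd[of d \<epsilon> x w] by (simp add: Suc_le_eq card_gt_0_iff)
  ultimately show ?thesis
    by linarith
qed

lemma sum_card_infl_nbhd_le:
  "(\<Sum>w\<in>{w\<in>{..<n}. infl_nbhd d E \<epsilon> x w \<noteq> {w}}. card (infl_nbhd d E \<epsilon> x w)) \<le> 4 * card E"
proof -
  have "(\<Sum>w\<in>{w\<in>{..<n}. infl_nbhd d E \<epsilon> x w \<noteq> {w}}. card (infl_nbhd d E \<epsilon> x w))
      \<le> (\<Sum>w\<in>{w\<in>{..<n}. infl_nbhd d E \<epsilon> x w \<noteq> {w}}. 2 * card {e\<in>E. w \<in> e})"
    by (intro sum_mono card_infl_nbhd_le_degree) simp
  also have "\<dots> \<le> (\<Sum>w<n. 2 * card {e\<in>E. w \<in> e})"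
    by (intro sum_mono2) auto
  also have "\<dots> \<le> 4 * card E"
    using sum_degree_le by (simp add: sum_distrib_left[symmetric])
  finally show ?thesis .
qed

lemma sq_sum_infl_differences_le:
  "(\<Sum>u\<in>infl_nbhd d E \<epsilon> x w. \<Sum>k<d. (x w k - x u k) * e k)^2
    \<le> real (card (infl_nbhd d E \<epsilon> x w)) * hk_gain d E \<epsilon> x w * (\<Sum>k<d. (e k)^2)"
proof -
  let ?N = "infl_nbhd d E \<epsilon> x w"
  have "(\<Sum>u\<in>?N. \<Sum>k<d. (x w k - x u k) * e k)^2
      \<le> (real (card ?N))^2 * sqdist d (x w) (hk_mean d E \<epsilon> x w) * (\<Sum>k<d. (e k)^2)"
    using finite_infl_nbhd[of d \<epsilon> x w] self_in_infl_nbhd[of w d E \<epsilon> x]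
    by (intro sum_projected_differences_sq_le) (auto simp: hk_mean_def)
  also have "\<dots> = real (card ?N) * hk_gain d E \<epsilon> x w * (\<Sum>k<d. (e k)^2)"
    by (simp add: hk_gain_def sqdist_commute power2_eq_square)
  finally show ?thesis .
qed

lemma sum_abs_infl_differences_sq_le:
  "(\<Sum>w\<in>{w\<in>{..<n}. infl_nbhd d E \<epsilon> x w \<noteq> {w}}.
       \<bar>\<Sum>u\<in>infl_nbhd d E \<epsilon> x w. \<Sum>k<d. (x w k - x u k) * e k\<bar>)^2
    \<le> 4 * real (card E) * ((\<Sum>k<d. (e k)^2) * (\<Sum>w<n. hk_gain d E \<epsilon> x w))"
proof -
  let ?N = "infl_nbhd d E \<epsilon> x"
  let ?W = "{w\<in>{..<n}. ?N w \<noteq> {w}}"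
  let ?G = "\<lambda>w. \<Sum>u\<in>?N w. \<Sum>k<d. (x w k - x u k) * e k"
  let ?e = "\<Sum>k<d. (e k)^2"
  have "0 \<le> ?e"
    by (simp add: sum_nonneg)
  have "(\<Sum>w\<in>?W. \<bar>?G w\<bar>)^2 \<le> (\<Sum>w\<in>?W. real (card (?N w))) * (\<Sum>w\<in>?W. \<bar>?G w\<bar>^2 / real (card (?N w)))"
    by (rule weighted_Cauchy_Schwarz_sum) (simp add: card_infl_nbhd_pos)
  also have "\<dots> \<le> 4 * real (card E) * (?e * (\<Sum>w<n. hk_gain d E \<epsilon> x w))"
  proof (rule mult_mono)
    show "(\<Sum>w\<in>?W. real (card (?N w))) \<le> 4 * real (card E)"
      using sum_card_infl_nbhd_le[of d \<epsilon> x] unfolding of_nat_sum[symmetric] by linarith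
    have "\<bar>?G w\<bar>^2 / real (card (?N w)) \<le> ?e * hk_gain d E \<epsilon> x w" for w
      using sq_sum_infl_differences_le[where w = w and e = e] card_infl_nbhd_pos[of d \<epsilon> x w]
      by (simp add: divide_le_eq mult_ac)
    then have "(\<Sum>w\<in>?W. \<bar>?G w\<bar>^2 / real (card (?N w))) \<le> (\<Sum>w\<in>?W. ?e * hk_gain d E \<epsilon> x w)"
      by (rule sum_mono)
    also have "\<dots> \<le> ?e * (\<Sum>w<n. hk_gain d E \<epsilon> x w)"
      unfolding sum_distrib_left using \<open>0 \<le> ?e\<close>
      by (intro sum_mono2) (auto simp: hk_gain_nonneg)
    finally show "(\<Sum>w\<in>?W. \<bar>?G w\<bar>^2 / real (card (?N w))) \<le> ?e * (\<Sum>w<n. hk_gain d E \<epsilon> x w)" .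
  qed (use \<open>0 \<le> ?e\<close> in \<open>auto intro: sum_nonneg hk_gain_nonneg\<close>)
  finally show ?thesis .
qed

lemma sqdist_infl_edge_le_sum_gain:
  assumes edge: "{u0, v0} \<in> E" and close: "edist d (x u0) (x v0) \<le> \<epsilon>"
  shows "sqdist d (x u0) (x v0) \<le> 4 * real (card E) * (\<Sum>w<n. hk_gain d E \<epsilon> x w)"
proof -
  let ?N = "infl_nbhd d E \<epsilon> x"
  define D where "D = sqdist d (x u0) (x v0)"
  define e where "e k = x u0 k - x v0 k" for k
  define f where "f u = (\<Sum>k<d. x u k * e k)" for u
  define gain where "gain = (\<Sum>w<n. hk_gain d E \<epsilon> x w)"
  have "0 \<le> gain"
    by (simp add: gain_def sum_nonneg hk_gain_nonneg)
  have "f u0 - f v0 = D" and e_sq: "(\<Sum>k<d. (e k)^2) = D"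
    unfolding f_def e_def D_def sqdist_def sum_subtractf[symmetric]
    by (auto intro!: sum.cong simp: power2_eq_square algebra_simps)
  show ?thesis
  proof (cases "D = 0")
    case True
    with \<open>0 \<le> gain\<close> show ?thesis
      by (simp add: D_def gain_def)
  next
    case False
    then have "0 < D"
      using sqdist_nonneg[of d "x u0" "x v0"] by (simp add: D_def)
    have "D \<le> (\<Sum>w\<in>{..<n}. \<bar>\<Sum>u\<in>?N w. f w - f u\<bar>)"
      unfolding \<open>f u0 - f v0 = D\<close>[symmetric]
    proof (rule gap_le_sum_abs_local_differences)
      show "v0 \<in> ?N u0"
        using edge close by (simp add: infl_nbhd_def insert_commute edist_commute)
    qed (use edge_endpoints[OF edge] infl_nbhd_subset infl_nbhd_sym \<open>f u0 - f v0 = D\<close> \<open>0 < D\<close> in auto)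
    also have "\<dots> = (\<Sum>w\<in>{..<n}. \<bar>\<Sum>u\<in>?N w. \<Sum>k<d. (x w k - x u k) * e k\<bar>)"
      by (simp add: f_def sum_subtractf[symmetric] left_diff_distrib)
    also have "\<dots> = (\<Sum>w\<in>{w\<in>{..<n}. ?N w \<noteq> {w}}. \<bar>\<Sum>u\<in>?N w. \<Sum>k<d. (x w k - x u k) * e k\<bar>)"
      by (rule sum.mono_neutral_right) auto
    finally have "D^2 \<le> (\<Sum>w\<in>{w\<in>{..<n}. ?N w \<noteq> {w}}. \<bar>\<Sum>u\<in>?N w. \<Sum>k<d. (x w k - x u k) * e k\<bar>)^2"
      using \<open>0 < D\<close> by (simp add: power_mono)
    also have "\<dots> \<le> 4 * real (card E) * (D * gain)"
      using sum_abs_infl_differences_sq_le[where e = e and x = x and d = d and \<epsilon> = \<epsilon>]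
      by (simp add: e_sq gain_def)
    finally have "D * D \<le> D * (4 * real (card E) * gain)"
      by (simp add: power2_eq_square mult_ac)
    with \<open>0 < D\<close> show ?thesis
      by (simp add: D_def gain_def)
  qed
qed

lemma sum_potential_hk_update_le:
  assumes "0 < \<epsilon>" and "0 < \<delta>" and unstable: "\<not> delta_stable d E \<epsilon> \<delta> x"
  shows "(\<Sum>v<n. potential d E \<epsilon> (hk_update d E \<epsilon> x v)) + \<delta>^2 / (4 * real (card E))
    \<le> real n * potential d E \<epsilon> x"
proof -
  obtain u0 v0 where edge: "{u0, v0} \<in> E" and close: "edist d (x u0) (x v0) \<le> \<epsilon>"
    and long: "\<not> edist d (x u0) (x v0) \<le> \<delta>"
    using unstable unfolding delta_stable_def by blast
  have "0 < card E"
    using edge finite_edges by (auto simp: card_gt_0_iff)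
  have "\<delta>^2 \<le> sqdist d (x u0) (x v0)"
    using long \<open>0 < \<delta>\<close> by (simp add: edist_le_iff_sqdist_le)
  also have "\<dots> \<le> 4 * real (card E) * (\<Sum>v<n. hk_gain d E \<epsilon> x v)"
    using edge close by (rule sqdist_infl_edge_le_sum_gain)
  finally have "\<delta>^2 / (4 * real (card E)) \<le> (\<Sum>v<n. hk_gain d E \<epsilon> x v)"
    using \<open>0 < card E\<close> by (simp add: divide_le_eq mult_ac)
  moreover have "(\<Sum>v<n. potential d E \<epsilon> (hk_update d E \<epsilon> x v)) + (\<Sum>v<n. hk_gain d E \<epsilon> x v)
      \<le> (\<Sum>v<n. potential d E \<epsilon> x)"
    unfolding sum.distrib[symmetric] using \<open>0 < \<epsilon>\<close> by (intro sum_mono potential_hk_update_le)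
  ultimately show ?thesis
    by simp
qed

lemma expected_potential_hk_update_le:
  assumes "0 < n" and "0 < \<epsilon>" and "0 < \<delta>" and unstable: "\<not> delta_stable d E \<epsilon> \<delta> x"
  shows "ennreal (\<delta>^2 / (4 * real n * real (card E)))
      + (\<integral>\<^sup>+v. ennreal (potential d E \<epsilon> (hk_update d E \<epsilon> x v)) \<partial>pmf_of_set {..<n})
    \<le> ennreal (potential d E \<epsilon> x)"
proof -
  define S where "S = (\<Sum>v<n. potential d E \<epsilon> (hk_update d E \<epsilon> x v))"
  have "0 \<le> S"
    by (simp add: S_def sum_nonneg potential_nonneg)
  have "(\<integral>\<^sup>+v. ennreal (potential d E \<epsilon> (hk_update d E \<epsilon> x v)) \<partial>pmf_of_set {..<n})
      = (\<Sum>v<n. ennreal (potential d E \<epsilon> (hk_update d E \<epsilon> x v))) / of_nat n"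
    using \<open>0 < n\<close> by (subst nn_integral_pmf_of_set) auto
  also have "\<dots> = ennreal (S / real n)"
    using \<open>0 < n\<close>
    by (simp add: S_def potential_nonneg sum_nonneg sum_ennreal divide_ennreal ennreal_of_nat_eq_real_of_nat)
  finally have integral_eq: "(\<integral>\<^sup>+v. ennreal (potential d E \<epsilon> (hk_update d E \<epsilon> x v)) \<partial>pmf_of_set {..<n})
      = ennreal (S / real n)" .
  have "\<delta>^2 / (4 * real n * real (card E)) + S / real n = (S + \<delta>^2 / (4 * real (card E))) / real n"
    by (simp add: add_divide_distrib mult_ac)
  also have "\<dots> \<le> (real n * potential d E \<epsilon> x) / real n"
    using sum_potential_hk_update_le[OF \<open>0 < \<epsilon>\<close> \<open>0 < \<delta>\<close> unstable]
    by (intro divide_right_mono) (simp_all add: S_def)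
  also have "\<dots> = potential d E \<epsilon> x"
    using \<open>0 < n\<close> by simp
  finally have "ennreal (\<delta>^2 / (4 * real n * real (card E)) + S / real n) \<le> ennreal (potential d E \<epsilon> x)"
    by (rule ennreal_leI)
  then show ?thesis
    using \<open>0 \<le> S\<close> by (simp add: integral_eq ennreal_plus[symmetric] del: ennreal_plus)
qed

end

lemma conv_time_eq_hitting_time:
  "conv_time d E \<epsilon> \<delta> x0 \<omega> = hitting_time (delta_stable d E \<epsilon> \<delta>) (hk_update d E \<epsilon>) x0 \<omega>"
proof -
  have "hk_traj d E \<epsilon> x0 \<omega> t = trajectory (hk_update d E \<epsilon>) x0 \<omega> t" for t
    by (induction t) simp_all
  then show ?thesis
    by (simp add: conv_time_def hitting_time_def)
qed

lemma expected_conv_time_le_potential: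
  assumes graph: "simple_graph n E" and "0 < n" and "0 < \<epsilon>" and "0 < \<delta>"
  shows "expected_conv_time n d E \<epsilon> \<delta> x0
    \<le> ennreal (4 * potential d E \<epsilon> x0 * real n * real (card E) / \<delta>^2)"
proof (cases "E = {}")
  case True
  then have "conv_time d E \<epsilon> \<delta> x0 \<omega> = 0" for \<omega>
    using hitting_time_Cons[of "delta_stable d E \<epsilon> \<delta>" _ x0 "shd \<omega>" "stl \<omega>"]
    by (simp add: conv_time_eq_hitting_time delta_stable_def)
  then show ?thesis
    by (simp add: expected_conv_time_def)
next
  case False
  define c where "c = \<delta>^2 / (4 * real n * real (card E))"
  have "0 < card E"
    using False finite_edges[OF graph] by (simp add: card_gt_0_iff)
  then have "0 < c"
    using \<open>0 < n\<close> \<open>0 < \<delta>\<close> by (simp add: c_def)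
  have "ennreal c * expected_conv_time n d E \<epsilon> \<delta> x0 \<le> ennreal (potential d E \<epsilon> x0)"
    unfolding expected_conv_time_def agent_choices_def conv_time_eq_hitting_time c_def
    using expected_potential_hk_update_le[OF graph \<open>0 < n\<close> \<open>0 < \<epsilon>\<close> \<open>0 < \<delta>\<close>]
    by (rule additive_drift[where \<Phi> = "\<lambda>x. ennreal (potential d E \<epsilon> x)"])
  also have "\<dots> = ennreal c * ennreal (4 * potential d E \<epsilon> x0 * real n * real (card E) / \<delta>^2)"
  proof -
    have "c * (4 * potential d E \<epsilon> x0 * real n * real (card E) / \<delta>^2) = potential d E \<epsilon> x0"
      using \<open>0 < n\<close> \<open>0 < card E\<close> \<open>0 < \<delta>\<close> by (simp add: c_def field_simps)
    then show ?thesis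
      using ennreal_mult'[of c "4 * potential d E \<epsilon> x0 * real n * real (card E) / \<delta>^2"] \<open>0 < c\<close>
      by (simp only: less_imp_le)
  qed
  finally show ?thesis
    using \<open>0 < c\<close> by (simp add: ennreal_mult_le_mult_iff)
qed

theorem theorem1:
  shows "\<exists>C>0. \<forall>(n::nat) (d::nat) (E::nat set set) (\<epsilon>::real) (\<delta>::real) (x0::nat \<Rightarrow> nat \<Rightarrow> real).
     n > 0 \<and> simple_graph n E \<and> \<epsilon> > 0 \<and> \<delta> > 0 \<longrightarrow>
       expected_conv_time n d E \<epsilon> \<delta> x0
         \<le> ennreal (C * potential d E \<epsilon> x0 * real n * real (card E) / \<delta>^2)
     \<and> expected_conv_time n d E \<epsilon> \<delta> x0
         \<le> ennreal (C * real n * real (card E)^2 * (\<epsilon> / \<delta>)^2)"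
proof (intro exI[of _ 4] conjI allI impI)
  fix n d :: nat and E :: "nat set set" and \<epsilon> \<delta> :: real and x0 :: "nat \<Rightarrow> nat \<Rightarrow> real"
  assume "n > 0 \<and> simple_graph n E \<and> \<epsilon> > 0 \<and> \<delta> > 0"
  then have "simple_graph n E" "0 < n" "0 < \<epsilon>" "0 < \<delta>"
    by auto
  then show bound: "expected_conv_time n d E \<epsilon> \<delta> x0
      \<le> ennreal (4 * potential d E \<epsilon> x0 * real n * real (card E) / \<delta>^2)"
    by (rule expected_conv_time_le_potential)
  have "4 * potential d E \<epsilon> x0 * real n * real (card E) / \<delta>^2
      \<le> 4 * (real (card E) * \<epsilon>^2) * real n * real (card E) / \<delta>^2"
    by (intro divide_right_mono mult_right_mono mult_left_mono potential_le) auto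
  also have "\<dots> = 4 * real n * real (card E)^2 * (\<epsilon> / \<delta>)^2"
    by (simp add: power2_eq_square field_simps)
  finally show "expected_conv_time n d E \<epsilon> \<delta> x0 \<le> ennreal (4 * real n * real (card E)^2 * (\<epsilon> / \<delta>)^2)"
    using bound by (meson ennreal_leI order_trans)
qed simp

end
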